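(* For all integers $L\ge 0$ and $n\ge 1$, $$S_L(n+2,n)=\frac{n(n+1)(n+2)}{3\cdot 2^3}\left[\frac{(n+2)!}{2}\right]^{L}\left(\frac{3}{2^L}(n-1)+\frac{4}{3^L}\right).$$ In particular, $S_0(n+2,n)=\frac{n(n+1)(n+2)(3n+1)}{4!}$.
   Context: For an integer $L\ge 0$ let ${}_0F_L(z)=\sum_{n=0}^{\infty}\frac{z^n}{(n!)^{L+1}}$. Define the numbers $S_L(n,l)$ ($n,l\ge 0$) by the formal power series identities $\frac{({}_0F_L(z)-1)^l}{l!}=\sum_{n\ge l}\frac{S_L(n,l)}{(n!)^{L+1}}z^n$ for each $l\ge 0$. In particular $S_0(n,l)$ are the Stirling numbers of the second kind. *)

theory Defs
  imports "HOL-Computational_Algebra.Formal_Power_Series"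
begin

definition hyp0F :: "nat \<Rightarrow> real fps" where
  "hyp0F L = Abs_fps (\<lambda>n. 1 / (fact n) ^ (L + 1))"

definition S_L :: "nat \<Rightarrow> nat \<Rightarrow> nat \<Rightarrow> real" where
  "S_L L n l = (fact n) ^ (L + 1) * fps_nth ((hyp0F L - 1) ^ l) n / fact l"

end

theory Submission
  imports Defs
begin

unbundle fps_syntax

text \<open>Since 0F_L - 1 = z G(z) with G(0) = 1, the coefficient of z^(n+2) in (0F_L - 1)^n is the
  coefficient of z^2 in G^n, namely n G_2 + (n choose 2) G_1^2: one factor contributes a block of
  size three, or two factors contribute blocks of size two. With G_1 = 1/2^(L+1) and
  G_2 = 1/6^(L+1) the closed form is a matter of algebra.\<close>

lemma fps_power_second_eq:
  fixes a :: "'a::comm_semiring_1 fps"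
  assumes "a $ 0 = 1"
  shows "(a ^ n) $ 2 = of_nat n * a $ 2 + of_nat (n choose 2) * (a $ 1)\<^sup>2"
proof (induction n)
  case 0
  show ?case by (simp add: numeral_2_eq_2)
next
  case (Suc n)
  have "(a ^ Suc n) $ 2 = a $ 0 * (a ^ n) $ 2 + a $ 1 * (a ^ n) $ 1 + a $ 2 * (a ^ n) $ 0"
    by (simp add: fps_mult_nth numeral_2_eq_2 sum.atLeast_Suc_atMost)
  also have "\<dots> = (a ^ n) $ 2 + of_nat n * (a $ 1)\<^sup>2 + a $ 2"
    unfolding fps_power_first_eq[OF assms] using assms
    by (simp add: fps_power_zeroth power2_eq_square algebra_simps)
  finally show ?case
    using Suc.IH by (simp add: numeral_2_eq_2 algebra_simps)
qed

lemma hyp0F_minus_one_eq: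
  "hyp0F L - 1 = fps_X * Abs_fps (\<lambda>k. 1 / fact (k + 1) ^ (L + 1))"
  by (rule fps_ext) (auto simp: hyp0F_def gr0_conv_Suc)

lemma hyp0F_minus_one_power_nth:
  "(hyp0F L - 1) ^ n $ (n + 2) = real n / 6 ^ (L + 1) + real (n choose 2) / 4 ^ (L + 1)"
proof -
  define G :: "real fps" where "G = Abs_fps (\<lambda>k. 1 / fact (k + 1) ^ (L + 1))"
  have "(hyp0F L - 1) ^ n $ (n + 2) = (G ^ n) $ 2"
    by (simp add: hyp0F_minus_one_eq G_def power_mult_distrib fps_X_power_mult_nth)
  also have "\<dots> = real n * G $ 2 + real (n choose 2) * (G $ 1)\<^sup>2"
    by (rule fps_power_second_eq) (simp add: G_def)
  also have "\<dots> = real n / 6 ^ (L + 1) + real (n choose 2) / 4 ^ (L + 1)"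
    by (simp add: G_def numeral_2_eq_2 fact_numeral power_one_over
        power_mult_distrib[symmetric] flip: power_mult)
  finally show ?thesis .
qed

lemma S_L_add_two:
  "S_L L (n + 2) n =
     real (n * (n + 1) * (n + 2)) / (3 * 2 ^ 3) * (fact (n + 2) / 2) ^ L *
     (3 / 2 ^ L * (real n - 1) + 4 / 3 ^ L)"
proof -
  have fact_n2: "(fact (n + 2) :: real) = fact n * ((real n + 1) * (real n + 2))"
    by (simp add: fact_Suc numeral_2_eq_2 algebra_simps)
  have choose_2: "real (n choose 2) = real n * (real n - 1) / 2"
    by (induction n) (simp_all add: numeral_2_eq_2 field_simps)
  have "(fact n :: real) > 0" by simp
  moreover have "(6::real) ^ L = 2 ^ L * 3 ^ L" "(4::real) ^ L = 2 ^ L * 2 ^ L"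
    by (simp_all flip: power_mult_distrib)
  ultimately show ?thesis
    unfolding S_L_def hyp0F_minus_one_power_nth choose_2
    by (subst (1 2) fact_n2) (simp add: power_mult_distrib field_simps)
qed

theorem mainTheorem5:
  shows "(\<forall>L n::nat. n \<ge> 1 \<longrightarrow>
           S_L L (n + 2) n =
             real (n * (n + 1) * (n + 2)) / (3 * 2 ^ 3) * (fact (n + 2) / 2) ^ L *
             (3 / 2 ^ L * (real n - 1) + 4 / 3 ^ L))
       \<and> (\<forall>n::nat. n \<ge> 1 \<longrightarrow>
           S_L 0 (n + 2) n = real (n * (n + 1) * (n + 2) * (3 * n + 1)) / fact 4)"
proof (intro conjI allI impI)
  fix L n :: nat
  show "S_L L (n + 2) n =
          real (n * (n + 1) * (n + 2)) / (3 * 2 ^ 3) * (fact (n + 2) / 2) ^ L *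
          (3 / 2 ^ L * (real n - 1) + 4 / 3 ^ L)"
    by (rule S_L_add_two)
next
  fix n :: nat
  show "S_L 0 (n + 2) n = real (n * (n + 1) * (n + 2) * (3 * n + 1)) / fact 4"
    using S_L_add_two[of 0 n] by (simp add: fact_numeral algebra_simps)
qed

end
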